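(* Let $\mathcal H$ be a finite-dimensional Hilbert space, $U(t,s)$ a unitary evolution, $|\psi\rangle$ an initial pure state at time $t_0$, and for times $t_0<t_1<\dots<t_n$ let $\hat\sigma^{(k)}=\{|\phi^{(k)}_i\rangle\langle\phi^{(k)}_i|\}_i$, $k=1,\dots,n$, be sets of rank-1 projectors onto orthonormal bases of $\mathcal H$ (Schrödinger picture), with $|\phi^{(0)}\rangle:=|\psi\rangle$. Form the graph whose vertices at time $t_k$ are the basis vectors $|\phi^{(k)}_i\rangle$, with an edge between $|\phi^{(k)}_j\rangle$ and $|\phi^{(k+1)}_i\rangle$ iff the Green function $G^{ij}(t_{k+1},t_k)=\langle\phi^{(k+1)}_i|U(t_{k+1},t_k)|\phi^{(k)}_j\rangle$ is nonzero. A loop is the closed walk formed by two distinct forward-in-time paths $\alpha=(\alpha_1,\dots,\alpha_n)$, $\beta=(\beta_1,\dots,\beta_n)$ from $|\psi\rangle$ to the same final vertex ($\alpha_n=\beta_n$), and its product of Green functions is $\prod_{k=0}^{n-1}G^{\alpha_{k+1}\alpha_k}(t_{k+1},t_k)\cdot\prod_{k=0}^{n-1}\overline{G^{\beta_{k+1}\beta_k}(t_{k+1},t_k)}$ (with $\alpha_0=\beta_0$ the initial vertex; traversing an edge backward contributes the complex conjugate). If the product of Green functions around every loop is purely imaginary (zero counting as purely imaginary, so in particular the absence of loops suffices), then the family of fine-grained histories $\{|\psi\rangle\langle\psi|,\sigma^{(1)},\dots,\sigma^{(n)}\}$ is weakly consistent.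
   Context: Here $\sigma^{(k)}$ denotes the Heisenberg-picture version of $\hat\sigma^{(k)}$, i.e. the projectors $P^{(k)}_i=U(t_k,t_0)^\dagger|\phi^{(k)}_i\rangle\langle\phi^{(k)}_i|U(t_k,t_0)$. For a history $\alpha=(\alpha_1,\dots,\alpha_n)$ the history operator is $C_\alpha=P^{(1)}_{\alpha_1}\cdots P^{(n)}_{\alpha_n}$, its probability is $Pr(\alpha)=\mathrm{Tr}\{C_\alpha^\dagger\rho C_\alpha\}$ and the coherence function is $D(\alpha;\beta)=\mathrm{Tr}\{C_\alpha^\dagger\rho C_\beta\}$, with $\rho=|\psi\rangle\langle\psi|$. The family is weakly consistent if $\mathrm{Re}\,D(\alpha;\beta)=\delta_{\alpha\beta}Pr(\alpha)$ for all histories $\alpha,\beta$, where $\delta_{\alpha\beta}=\prod_k\delta_{\alpha_k\beta_k}$. *)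

theory Defs
  imports "HOL-Analysis.Analysis"
begin

text \<open>Finite-dimensional Hilbert space: complex ^ 'n (dimension CARD('n)).
  Operators: complex ^ 'n ^ 'n.\<close>

definition cinner :: "complex ^ 'n \<Rightarrow> complex ^ 'n \<Rightarrow> complex" where
  "cinner x y = (\<Sum>i\<in>UNIV. cnj (x $ i) * y $ i)"

definition adj :: "complex ^ 'n ^ 'n \<Rightarrow> complex ^ 'n ^ 'n" where
  "adj A = (\<chi> i j. cnj (A $ j $ i))"

definition ctrace :: "complex ^ 'n ^ 'n \<Rightarrow> complex" where
  "ctrace A = (\<Sum>i\<in>UNIV. A $ i $ i)"

definition proj :: "complex ^ 'n \<Rightarrow> complex ^ 'n ^ 'n" where
  "proj v = (\<chi> i j. v $ i * cnj (v $ j))"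

definition unitary_op :: "complex ^ 'n ^ 'n \<Rightarrow> bool" where
  "unitary_op A \<longleftrightarrow> adj A ** A = mat 1 \<and> A ** adj A = mat 1"

definition heis_proj ::
  "(real \<Rightarrow> real \<Rightarrow> complex ^ 'n ^ 'n) \<Rightarrow> (nat \<Rightarrow> real) \<Rightarrow> (nat \<Rightarrow> 'n \<Rightarrow> complex ^ 'n)
    \<Rightarrow> nat \<Rightarrow> 'n \<Rightarrow> complex ^ 'n ^ 'n" where
  "heis_proj U t phi k i = adj (U (t k) (t 0)) ** proj (phi k i) ** U (t k) (t 0)"

text \<open>History operator C_alpha = P^(1)_{alpha 1} ... P^(m)_{alpha m}
  (a history is a function alpha, only its values on {1..n} matter).\<close>
fun hist_op ::
  "(real \<Rightarrow> real \<Rightarrow> complex ^ 'n ^ 'n) \<Rightarrow> (nat \<Rightarrow> real) \<Rightarrow> (nat \<Rightarrow> 'n \<Rightarrow> complex ^ 'n)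
    \<Rightarrow> nat \<Rightarrow> (nat \<Rightarrow> 'n) \<Rightarrow> complex ^ 'n ^ 'n" where
  "hist_op U t phi 0 \<alpha> = mat 1"
| "hist_op U t phi (Suc m) \<alpha> = hist_op U t phi m \<alpha> ** heis_proj U t phi (Suc m) (\<alpha> (Suc m))"

definition coherence ::
  "(real \<Rightarrow> real \<Rightarrow> complex ^ 'n ^ 'n) \<Rightarrow> (nat \<Rightarrow> real) \<Rightarrow> complex ^ 'n
    \<Rightarrow> (nat \<Rightarrow> 'n \<Rightarrow> complex ^ 'n) \<Rightarrow> nat \<Rightarrow> (nat \<Rightarrow> 'n) \<Rightarrow> (nat \<Rightarrow> 'n) \<Rightarrow> complex" where
  "coherence U t psi phi n \<alpha> \<beta> =
     ctrace (adj (hist_op U t phi n \<alpha>) ** proj psi ** hist_op U t phi n \<beta>)"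

definition hist_prob ::
  "(real \<Rightarrow> real \<Rightarrow> complex ^ 'n ^ 'n) \<Rightarrow> (nat \<Rightarrow> real) \<Rightarrow> complex ^ 'n
    \<Rightarrow> (nat \<Rightarrow> 'n \<Rightarrow> complex ^ 'n) \<Rightarrow> nat \<Rightarrow> (nat \<Rightarrow> 'n) \<Rightarrow> complex" where
  "hist_prob U t psi phi n \<alpha> =
     ctrace (adj (hist_op U t phi n \<alpha>) ** proj psi ** hist_op U t phi n \<alpha>)"

definition weakly_consistent ::
  "(real \<Rightarrow> real \<Rightarrow> complex ^ 'n ^ 'n) \<Rightarrow> (nat \<Rightarrow> real) \<Rightarrow> complex ^ 'n
    \<Rightarrow> (nat \<Rightarrow> 'n \<Rightarrow> complex ^ 'n) \<Rightarrow> nat \<Rightarrow> bool" where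
  "weakly_consistent U t psi phi n \<longleftrightarrow>
     (\<forall>\<alpha> \<beta>. complex_of_real (Re (coherence U t psi phi n \<alpha> \<beta>)) =
        (if (\<forall>k\<in>{1..n}. \<alpha> k = \<beta> k) then hist_prob U t psi phi n \<alpha> else 0))"

text \<open>Graph vertices: at time t_0 the single vertex psi (index irrelevant), at t_k (k \<ge> 1) the basis vectors.\<close>
definition vertex :: "complex ^ 'n \<Rightarrow> (nat \<Rightarrow> 'n \<Rightarrow> complex ^ 'n) \<Rightarrow> nat \<Rightarrow> 'n \<Rightarrow> complex ^ 'n" where
  "vertex psi phi k j = (if k = 0 then psi else phi k j)"

definition green ::
  "(real \<Rightarrow> real \<Rightarrow> complex ^ 'n ^ 'n) \<Rightarrow> (nat \<Rightarrow> real) \<Rightarrow> complex ^ 'n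
    \<Rightarrow> (nat \<Rightarrow> 'n \<Rightarrow> complex ^ 'n) \<Rightarrow> nat \<Rightarrow> 'n \<Rightarrow> 'n \<Rightarrow> complex" where
  "green U t psi phi k i j =
     cinner (vertex psi phi (Suc k) i) (U (t (Suc k)) (t k) *v vertex psi phi k j)"

definition is_path ::
  "(real \<Rightarrow> real \<Rightarrow> complex ^ 'n ^ 'n) \<Rightarrow> (nat \<Rightarrow> real) \<Rightarrow> complex ^ 'n
    \<Rightarrow> (nat \<Rightarrow> 'n \<Rightarrow> complex ^ 'n) \<Rightarrow> nat \<Rightarrow> (nat \<Rightarrow> 'n) \<Rightarrow> bool" where
  "is_path U t psi phi n \<alpha> \<longleftrightarrow> (\<forall>k<n. green U t psi phi k (\<alpha> (Suc k)) (\<alpha> k) \<noteq> 0)"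

definition path_amp ::
  "(real \<Rightarrow> real \<Rightarrow> complex ^ 'n ^ 'n) \<Rightarrow> (nat \<Rightarrow> real) \<Rightarrow> complex ^ 'n
    \<Rightarrow> (nat \<Rightarrow> 'n \<Rightarrow> complex ^ 'n) \<Rightarrow> nat \<Rightarrow> (nat \<Rightarrow> 'n) \<Rightarrow> complex" where
  "path_amp U t psi phi n \<alpha> = (\<Prod>k<n. green U t psi phi k (\<alpha> (Suc k)) (\<alpha> k))"

end

theory Submission imports Defs begin

(* Running the history backwards, C_alpha^dagger psi is the final vertex of the path alpha,
   carried back to time t_0, times the product of the Green functions along alpha. Since the
   evolution is unitary, D(alpha;beta) is therefore the product of Green functions around the
   loop formed by alpha and beta times the overlap of the two final vertices, which vanishes
   unless alpha_n = beta_n. So off the diagonal Re D(alpha;beta) is either zero or the real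
   part of a loop product, and on the diagonal D(alpha;alpha) is a squared modulus. *)

definition unitary_evolution :: "(real \<Rightarrow> real \<Rightarrow> complex ^ 'n ^ 'n) \<Rightarrow> bool" where
  "unitary_evolution U \<longleftrightarrow>
     (\<forall>a b. unitary_op (U a b)) \<and> (\<forall>a b c. U a b ** U b c = U a c)"

lemma adj_matrix_mult: "adj (A ** B) = adj B ** adj (A :: complex ^ 'n ^ 'n)"
  by (simp add: adj_def matrix_matrix_mult_def vec_eq_iff mult.commute)

lemma adj_adj [simp]: "adj (adj A) = A"
  by (simp add: adj_def vec_eq_iff)

lemma adj_mat_1 [simp]: "adj (mat 1 :: complex ^ 'n ^ 'n) = mat 1"
  by (simp add: adj_def vec_eq_iff mat_def)

lemma adj_proj [simp]: "adj (proj v) = proj v"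
  by (simp add: adj_def proj_def vec_eq_iff mult.commute)

lemma cinner_adj_left: "cinner (adj A *v x) y = cinner x (A *v y)"
proof -
  have "cinner (adj A *v x) y = (\<Sum>i\<in>UNIV. \<Sum>j\<in>UNIV. A$j$i * cnj (x$j) * y$i)"
    unfolding cinner_def adj_def matrix_vector_mult_def
    by (simp add: sum_distrib_right sum_distrib_left mult_ac)
  also have "\<dots> = (\<Sum>j\<in>UNIV. \<Sum>i\<in>UNIV. A$j$i * cnj (x$j) * y$i)"
    by (rule sum.swap)
  also have "\<dots> = cinner x (A *v y)"
    by (simp add: cinner_def matrix_vector_mult_def sum_distrib_left mult_ac)
  finally show ?thesis .
qed

lemma cinner_scalar_mult: "cinner (a *s x) (b *s y) = cnj a * b * cinner x y"
  by (simp add: cinner_def sum_distrib_left mult_ac)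

lemma proj_matrix_vector_mult: "proj v *v y = cinner v y *s v"
  by (simp add: proj_def cinner_def matrix_vector_mult_def vec_eq_iff sum_distrib_left mult_ac)

lemma ctrace_proj: "ctrace (A ** proj v ** B) = cinner (adj B *v v) (A *v v)"
proof -
  have "ctrace (A ** proj v ** B) =
      (\<Sum>i\<in>UNIV. \<Sum>l\<in>UNIV. \<Sum>k\<in>UNIV. A$i$k * v$k * cnj (v$l) * B$l$i)"
    unfolding ctrace_def proj_def matrix_matrix_mult_def
    by (simp add: sum_distrib_right sum_distrib_left mult_ac)
  also have "\<dots> = cinner (adj B *v v) (A *v v)"
    by (simp add: cinner_def adj_def matrix_vector_mult_def sum_distrib_left sum_distrib_right mult_ac)
  finally show ?thesis .
qed

lemma unitary_op_cinner_adj: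
  assumes "unitary_op V"
  shows "cinner (adj V *v x) (adj V *v y) = cinner x y"
  using assms by (simp add: cinner_adj_left matrix_vector_mul_assoc unitary_op_def)

lemma unitary_op_mult_left_cancel:
  assumes "unitary_op A" and "A ** B = A ** C"
  shows "B = C"
proof -
  have "B = (adj A ** A) ** B"
    using assms(1) by (simp add: unitary_op_def)
  also have "\<dots> = (adj A ** A) ** C"
    using assms(2) by (metis matrix_mul_assoc)
  also have "\<dots> = C"
    using assms(1) by (simp add: unitary_op_def)
  finally show ?thesis .
qed

lemma unitary_evolution_same_time:
  assumes "unitary_evolution U"
  shows "U a a = mat 1"
  using assms unitary_op_mult_left_cancel[of "U a a" "U a a" "mat 1"]
  by (simp add: unitary_evolution_def)

lemma unitary_evolution_adj:
  assumes "unitary_evolution U"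
  shows "adj (U a b) = U b a"
proof -
  have "U a b ** U b a = U a b ** adj (U a b)"
    using assms unitary_evolution_same_time[OF assms, of a]
    by (simp add: unitary_evolution_def unitary_op_def)
  then show ?thesis
    using assms unitary_op_mult_left_cancel by (metis unitary_evolution_def)
qed

lemma adj_heis_proj [simp]: "adj (heis_proj U t phi k i) = heis_proj U t phi k i"
  by (simp add: heis_proj_def adj_matrix_mult matrix_mul_assoc)

lemma hist_op_cong: "(\<forall>k\<in>{1..m}. \<alpha> k = \<beta> k) \<Longrightarrow> hist_op U t phi m \<alpha> = hist_op U t phi m \<beta>"
  by (induction m) auto

lemma path_amp_eq_0_if_not_path:
  "\<not> is_path U t psi phi n \<alpha> \<Longrightarrow> path_amp U t psi phi n \<alpha> = 0"
  by (auto simp: is_path_def path_amp_def)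

lemma adj_hist_op_apply_state:
  assumes "unitary_evolution U"
  shows "adj (hist_op U t phi m \<alpha>) *v psi =
    path_amp U t psi phi m \<alpha> *s (U (t 0) (t m) *v vertex psi phi m (\<alpha> m))"
proof (induction m)
  case 0
  then show ?case
    using unitary_evolution_same_time[OF assms] by (simp add: path_amp_def vertex_def)
next
  case (Suc m)
  let ?a = "path_amp U t psi phi m \<alpha>"
  have "adj (hist_op U t phi (Suc m) \<alpha>) *v psi
      = heis_proj U t phi (Suc m) (\<alpha> (Suc m)) *v (adj (hist_op U t phi m \<alpha>) *v psi)"
    by (simp add: adj_matrix_mult matrix_vector_mul_assoc)
  also have "\<dots> = ?a *s (U (t 0) (t (Suc m)) *v (proj (phi (Suc m) (\<alpha> (Suc m))) *v
      ((U (t (Suc m)) (t 0) ** U (t 0) (t m)) *v vertex psi phi m (\<alpha> m))))"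
    by (simp add: Suc.IH vector_scalar_commute heis_proj_def unitary_evolution_adj[OF assms]
        matrix_vector_mul_assoc matrix_mul_assoc)
  also have "\<dots> = ?a * green U t psi phi m (\<alpha> (Suc m)) (\<alpha> m) *s
      (U (t 0) (t (Suc m)) *v vertex psi phi (Suc m) (\<alpha> (Suc m)))"
    using assms by (simp add: unitary_evolution_def proj_matrix_vector_mult
        vector_scalar_commute green_def vertex_def)
  finally show ?case by (simp add: path_amp_def)
qed

lemma coherence_eq_loop_amp:
  assumes "unitary_evolution U"
  shows "coherence U t psi phi n \<alpha> \<beta> =
    path_amp U t psi phi n \<alpha> * cnj (path_amp U t psi phi n \<beta>) *
    cinner (vertex psi phi n (\<beta> n)) (vertex psi phi n (\<alpha> n))"
proof -
  have "coherence U t psi phi n \<alpha> \<beta> =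
      cinner (adj (hist_op U t phi n \<beta>) *v psi) (adj (hist_op U t phi n \<alpha>) *v psi)"
    by (simp add: coherence_def ctrace_proj)
  also have "\<dots> = cnj (path_amp U t psi phi n \<beta>) * path_amp U t psi phi n \<alpha> *
      cinner (vertex psi phi n (\<beta> n)) (vertex psi phi n (\<alpha> n))"
    using assms unitary_op_cinner_adj[of "U (t n) (t 0)"]
    by (simp add: adj_hist_op_apply_state cinner_scalar_mult unitary_evolution_adj
        unitary_evolution_def)
  finally show ?thesis by (simp add: mult_ac)
qed

theorem theorem2:
  fixes U :: "real \<Rightarrow> real \<Rightarrow> complex ^ 'n ^ 'n"
    and t :: "nat \<Rightarrow> real"
    and psi :: "complex ^ 'n"
    and phi :: "nat \<Rightarrow> 'n \<Rightarrow> complex ^ 'n"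
    and n :: nat
  assumes unitary: "\<And>a b. unitary_op (U a b)"
    and evol: "\<And>a b c. U a b ** U b c = U a c"
    and times: "\<And>k. k < n \<Longrightarrow> t k < t (Suc k)"
    and psi_norm: "cinner psi psi = 1"
    and onb: "\<And>k i j. k \<in> {1..n} \<Longrightarrow> cinner (phi k i) (phi k j) = (if i = j then 1 else 0)"
    and loops: "\<And>\<alpha> \<beta>. is_path U t psi phi n \<alpha> \<Longrightarrow> is_path U t psi phi n \<beta> \<Longrightarrow>
                  (\<exists>k\<in>{1..n}. \<alpha> k \<noteq> \<beta> k) \<Longrightarrow> \<alpha> n = \<beta> n \<Longrightarrow>
                  Re (path_amp U t psi phi n \<alpha> * cnj (path_amp U t psi phi n \<beta>)) = 0"
  shows "weakly_consistent U t psi phi n"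
  unfolding weakly_consistent_def
proof (intro allI)
  fix \<alpha> \<beta> :: "nat \<Rightarrow> 'n"
  have "unitary_evolution U"
    using unitary evol by (simp add: unitary_evolution_def)
  note coherence = coherence_eq_loop_amp[OF this]
  have overlap: "cinner (vertex psi phi n i) (vertex psi phi n j) = (if n = 0 \<or> i = j then 1 else 0)"
    for i j
    using psi_norm onb[of n] by (auto simp: vertex_def)
  show "complex_of_real (Re (coherence U t psi phi n \<alpha> \<beta>)) =
      (if \<forall>k\<in>{1..n}. \<alpha> k = \<beta> k then hist_prob U t psi phi n \<alpha> else 0)"
  proof (cases "\<forall>k\<in>{1..n}. \<alpha> k = \<beta> k")
    case True
    have "coherence U t psi phi n \<alpha> \<beta> = hist_prob U t psi phi n \<alpha>"
      using hist_op_cong[OF True] by (simp add: coherence_def hist_prob_def)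
    moreover have "hist_prob U t psi phi n \<alpha> = of_real ((cmod (path_amp U t psi phi n \<alpha>))\<^sup>2)"
      using coherence[where \<beta> = \<alpha>]
      by (simp add: coherence_def hist_prob_def overlap complex_norm_square del: of_real_power)
    ultimately show ?thesis
      using True by simp
  next
    case False
    then have "n \<noteq> 0"
      by auto
    have "Re (path_amp U t psi phi n \<alpha> * cnj (path_amp U t psi phi n \<beta>)) = 0" if "\<alpha> n = \<beta> n"
      using loops[of \<alpha> \<beta>] that False path_amp_eq_0_if_not_path by fastforce
    then show ?thesis
      unfolding if_not_P[OF False] using \<open>n \<noteq> 0\<close>
      by (cases "\<alpha> n = \<beta> n") (simp_all add: coherence overlap)
  qed
qed

end
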